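(* For every positive integer $d$, the hypercube $Q_d$ satisfies $\chi_{\mathrm{so}}(Q_d)=2$ if $d$ is odd and $\chi_{\mathrm{so}}(Q_d)=4$ if $d$ is even.
   Context: $Q_d$ has vertex set $\{0,1\}^d$, two vertices adjacent iff they differ in exactly one coordinate. A strong odd coloring of a graph is a proper vertex coloring such that for each vertex $v$ every color appearing on the open neighborhood $N(v)$ occurs an odd number of times on $N(v)$; $\chi_{\mathrm{so}}$ is the minimum number of colors. *)

theory Defs
  imports Main
begin

text \<open>A graph is given by a vertex set V and a symmetric irreflexive adjacency
relation E (only its restriction to V matters). Open neighbourhood of v:\<close>

definition nbhd :: "'a set \<Rightarrow> ('a \<Rightarrow> 'a \<Rightarrow> bool) \<Rightarrow> 'a \<Rightarrow> 'a set" where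
  "nbhd V E v = {u \<in> V. E v u}"

definition proper_coloring :: "'a set \<Rightarrow> ('a \<Rightarrow> 'a \<Rightarrow> bool) \<Rightarrow> ('a \<Rightarrow> 'c) \<Rightarrow> bool" where
  "proper_coloring V E c \<longleftrightarrow> (\<forall>u\<in>V. \<forall>v\<in>V. E u v \<longrightarrow> c u \<noteq> c v)"

definition strong_odd_coloring :: "'a set \<Rightarrow> ('a \<Rightarrow> 'a \<Rightarrow> bool) \<Rightarrow> ('a \<Rightarrow> 'c) \<Rightarrow> bool" where
  "strong_odd_coloring V E c \<longleftrightarrow> proper_coloring V E c \<and>
     (\<forall>v\<in>V. \<forall>a \<in> c ` nbhd V E v. odd (card {u \<in> nbhd V E v. c u = a}))"

definition chi_so :: "'a set \<Rightarrow> ('a \<Rightarrow> 'a \<Rightarrow> bool) \<Rightarrow> nat" where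
  "chi_so V E = (LEAST k. \<exists>c :: 'a \<Rightarrow> nat. c ` V \<subseteq> {..<k} \<and> strong_odd_coloring V E c)"

definition cube_vertices :: "nat \<Rightarrow> bool list set" where
  "cube_vertices d = {xs. length xs = d}"

definition cube_adj :: "bool list \<Rightarrow> bool list \<Rightarrow> bool" where
  "cube_adj xs ys \<longleftrightarrow> length xs = length ys \<and>
     card {i. i < length xs \<and> xs ! i \<noteq> ys ! i} = 1"

end

theory Submission
  imports Defs
begin

text \<open>Colour a vertex by the parity of its weight: for odd d, all d neighbours of a
vertex receive the other colour. For even d, additionally recording the first coordinate
gives 4 colours, and on every neighbourhood the colour classes have sizes 1 and d - 1.

For the lower bound let d be even and suppose only 3 colours occur. The colour classes on
N(w) are odd and |N(w)| = d is even, so N(w) carries an even, nonzero number of colours,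
none of them c(w): exactly the two others. Hence the number of b-coloured neighbours of w
is odd iff c(w) \<noteq> b. Summing this number over the neighbours of a fixed v counts the
pairs (i, j) with c(v + e_i + e_j) = b; this count is symmetric in (i, j) with diagonal
d \<cdot> [c(v) = b], hence even. So an even number of neighbours of v avoid b, and for
b \<noteq> c(v) the number of b-coloured neighbours of v is even, a contradiction.\<close>

lemma even_card_image_iff_odd_fibres:
  assumes "finite A" and "\<And>x. x \<in> A \<Longrightarrow> odd (card {y \<in> A. f y = f x})"
  shows "even (card (f ` A)) \<longleftrightarrow> even (card A)"
proof -
  have "card A = (\<Sum>b\<in>f ` A. card {x \<in> A. f x = b})"
    using sum.image_gen[OF assms(1), of "\<lambda>_. 1 :: nat" f] by simp
  also have "even \<dots> \<longleftrightarrow> even (card {b \<in> f ` A. odd (card {x \<in> A. f x = b})})"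
    using assms(1) by (rule even_sum_iff[OF finite_imageI])
  also have "{b \<in> f ` A. odd (card {x \<in> A. f x = b})} = f ` A"
    using assms(2) by auto
  finally show ?thesis ..
qed

lemma sum_square_symmetric:
  fixes g :: "nat \<Rightarrow> nat \<Rightarrow> nat"
  assumes "\<And>i j. g i j = g j i"
  shows "(\<Sum>i<n. \<Sum>j<n. g i j) = (\<Sum>i<n. g i i) + 2 * (\<Sum>i<n. \<Sum>j<i. g i j)"
proof (induction n)
  case 0
  then show ?case by simp
next
  case (Suc n)
  have "(\<Sum>i<Suc n. \<Sum>j<Suc n. g i j)
      = (\<Sum>i<n. \<Sum>j<n. g i j) + (\<Sum>i<n. g i n) + (\<Sum>j<n. g n j) + g n n"
    by (simp add: sum.distrib)
  also have "(\<Sum>i<n. g i n) = (\<Sum>j<n. g n j)"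
    using assms by simp
  finally show ?case
    using Suc by simp
qed

lemma chi_so_eqI:
  fixes c :: "'a \<Rightarrow> nat"
  assumes "c ` V \<subseteq> {..<k}" and "strong_odd_coloring V E c"
    and "\<And>c' :: 'a \<Rightarrow> nat. strong_odd_coloring V E c' \<Longrightarrow> k \<le> card (c' ` V)"
  shows "chi_so V E = k"
  unfolding chi_so_def
proof (rule Least_equality)
  show "\<exists>c :: 'a \<Rightarrow> nat. c ` V \<subseteq> {..<k} \<and> strong_odd_coloring V E c"
    using assms(1,2) by blast
next
  fix y
  assume "\<exists>c :: 'a \<Rightarrow> nat. c ` V \<subseteq> {..<y} \<and> strong_odd_coloring V E c"
  then obtain c' :: "'a \<Rightarrow> nat" where "c' ` V \<subseteq> {..<y}" and "strong_odd_coloring V E c'"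
    by blast
  then show "k \<le> y"
    using assms(3) card_mono[OF finite_lessThan] by (metis card_lessThan order.trans)
qed

definition flip :: "nat \<Rightarrow> bool list \<Rightarrow> bool list" where
  "flip i xs = xs[i := \<not> xs ! i]"

lemma length_flip [simp]: "length (flip i xs) = length xs"
  by (simp add: flip_def)

lemma flip_flip [simp]: "flip i (flip i xs) = xs"
  by (cases "i < length xs") (auto simp: flip_def list_update_beyond)

lemma flip_commute: "flip i (flip j xs) = flip j (flip i xs)"
  by (cases "i = j") (simp_all add: flip_def list_update_swap)

lemma nth_flip: "k < length xs \<Longrightarrow> flip i xs ! k = (if k = i then \<not> xs ! k else xs ! k)"
  by (simp add: flip_def)

lemma finite_cube_vertices: "finite (cube_vertices d)"
  using finite_lists_length_eq[of "UNIV :: bool set" d] by (simp add: cube_vertices_def)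

lemma cube_adj_iff_flip:
  "cube_adj xs ys \<longleftrightarrow> length ys = length xs \<and> (\<exists>i<length xs. ys = flip i xs)"
proof
  assume "cube_adj xs ys"
  then have len: "length ys = length xs"
    and "card {i. i < length xs \<and> xs ! i \<noteq> ys ! i} = 1"
    by (auto simp: cube_adj_def)
  then obtain i where diff: "{i. i < length xs \<and> xs ! i \<noteq> ys ! i} = {i}"
    by (auto simp: card_1_singleton_iff)
  then have "i < length xs" by auto
  moreover have "ys = flip i xs"
    by (rule nth_equalityI) (use len diff in \<open>auto simp: nth_flip\<close>)
  ultimately show "length ys = length xs \<and> (\<exists>i<length xs. ys = flip i xs)"
    using len by auto
next
  assume "length ys = length xs \<and> (\<exists>i<length xs. ys = flip i xs)"
  then obtain i where i: "i < length xs" and ys: "ys = flip i xs"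
    by auto
  then have "{k. k < length xs \<and> xs ! k \<noteq> ys ! k} = {i}"
    by (auto simp: nth_flip split: if_splits)
  then show "cube_adj xs ys"
    using ys by (simp add: cube_adj_def)
qed

lemma nbhd_cube:
  "length v = d \<Longrightarrow> nbhd (cube_vertices d) cube_adj v = (\<lambda>i. flip i v) ` {..<d}"
  by (auto simp: nbhd_def cube_vertices_def cube_adj_iff_flip)

lemma inj_on_flip: "inj_on (\<lambda>i. flip i v) {..<length v}"
  by (rule inj_onI) (metis lessThan_iff nth_flip)

lemma card_colour_class_nbhd_cube:
  assumes "length v = d"
  shows "card {u \<in> nbhd (cube_vertices d) cube_adj v. c u = a}
    = card {i \<in> {..<d}. c (flip i v) = a}"
proof -
  have "{u \<in> nbhd (cube_vertices d) cube_adj v. c u = a}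
      = (\<lambda>i. flip i v) ` {i \<in> {..<d}. c (flip i v) = a}"
    using assms by (auto simp: nbhd_cube)
  moreover have "inj_on (\<lambda>i. flip i v) {i \<in> {..<d}. c (flip i v) = a}"
    by (rule inj_on_subset[OF inj_on_flip[of v]]) (use assms in auto)
  ultimately show ?thesis
    by (simp add: card_image)
qed

lemma strong_odd_coloring_cube_iff:
  "strong_odd_coloring (cube_vertices d) cube_adj c \<longleftrightarrow>
    (\<forall>v. length v = d \<longrightarrow>
      (\<forall>i<d. c (flip i v) \<noteq> c v) \<and>
      (\<forall>i<d. odd (card {j \<in> {..<d}. c (flip j v) = c (flip i v)})))"
proof -
  have proper: "proper_coloring (cube_vertices d) cube_adj c \<longleftrightarrow>
      (\<forall>v. length v = d \<longrightarrow> (\<forall>i<d. c (flip i v) \<noteq> c v))"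
    unfolding proper_coloring_def cube_vertices_def cube_adj_iff_flip
    by (auto simp: nth_flip; metis length_flip)
  have odd_classes:
    "(\<forall>a \<in> c ` nbhd (cube_vertices d) cube_adj v.
        odd (card {u \<in> nbhd (cube_vertices d) cube_adj v. c u = a}))
      \<longleftrightarrow> (\<forall>i<d. odd (card {j \<in> {..<d}. c (flip j v) = c (flip i v)}))"
    if "length v = d" for v
  proof -
    have "c ` nbhd (cube_vertices d) cube_adj v = (\<lambda>i. c (flip i v)) ` {..<d}"
      using nbhd_cube[OF that] by auto
    then show ?thesis
      by (simp add: card_colour_class_nbhd_cube[OF that]) blast
  qed
  show ?thesis
    unfolding strong_odd_coloring_def proper
    using odd_classes by (auto simp: cube_vertices_def)
qed

definition parity :: "bool list \<Rightarrow> nat" where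
  "parity xs = count_list xs True mod 2"

lemma odd_count_list_flip_iff:
  "i < length xs \<Longrightarrow> odd (count_list (flip i xs) True) \<longleftrightarrow> even (count_list xs True)"
proof (induction xs arbitrary: i)
  case Nil
  then show ?case by simp
next
  case (Cons x xs)
  show ?case
  proof (cases i)
    case 0
    then show ?thesis by (simp add: flip_def)
  next
    case (Suc j)
    then have "flip i (x # xs) = x # flip j xs"
      by (simp add: flip_def)
    then show ?thesis
      using Cons Suc by simp
  qed
qed

lemma parity_less_2: "parity xs < 2"
  by (simp add: parity_def)

lemma parity_flip: "i < length xs \<Longrightarrow> parity (flip i xs) = 1 - parity xs"
  using odd_count_list_flip_iff[of i xs] by (auto simp: parity_def odd_iff_mod_2_eq_one even_iff_mod_2_eq_zero)

lemma strong_odd_coloring_parity: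
  assumes "odd d"
  shows "strong_odd_coloring (cube_vertices d) cube_adj parity"
  unfolding strong_odd_coloring_cube_iff
proof (intro allI impI conjI)
  fix v :: "bool list" and i
  assume "length v = d" and "i < d"
  then have colour_flip: "\<And>j. j < d \<Longrightarrow> parity (flip j v) = 1 - parity v"
    by (simp add: parity_flip)
  then show "parity (flip i v) \<noteq> parity v"
    using colour_flip[OF \<open>i < d\<close>] by arith
  have "{j \<in> {..<d}. parity (flip j v) = parity (flip i v)} = {..<d}"
    using colour_flip \<open>i < d\<close> by auto
  then show "odd (card {j \<in> {..<d}. parity (flip j v) = parity (flip i v)})"
    using assms by simp
qed

definition parity_first_bit :: "bool list \<Rightarrow> nat" where
  "parity_first_bit v = parity v + 2 * of_bool (v ! 0)"

lemma parity_first_bit_less_4: "parity_first_bit v < 4"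
  using parity_less_2[of v] by (cases "v ! 0") (auto simp: parity_first_bit_def)

lemma strong_odd_coloring_parity_first_bit:
  assumes "even d"
  shows "strong_odd_coloring (cube_vertices d) cube_adj parity_first_bit"
  unfolding strong_odd_coloring_cube_iff
proof (intro allI impI conjI)
  fix v :: "bool list" and i
  assume len: "length v = d" and i: "i < d"
  have colour_flip: "\<And>j. j < d \<Longrightarrow> parity_first_bit (flip j v)
      = (1 - parity v) + 2 * of_bool (if j = 0 then \<not> v ! 0 else v ! 0)"
    using len by (simp add: parity_first_bit_def parity_flip nth_flip)
  show "parity_first_bit (flip i v) \<noteq> parity_first_bit v"
    using parity_less_2[of v] unfolding colour_flip[OF i]
    by (cases "parity v"; cases "v ! 0"; cases "i = 0") (auto simp: parity_first_bit_def)
  have "{j \<in> {..<d}. parity_first_bit (flip j v) = parity_first_bit (flip i v)}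
      = {j \<in> {..<d}. (j = 0) = (i = 0)}"
    using colour_flip i by (auto split: if_splits)
  also have "\<dots> = (if i = 0 then {0} else {1..<d})"
    using i by auto
  finally show "odd (card {j \<in> {..<d}. parity_first_bit (flip j v) = parity_first_bit (flip i v)})"
    using i assms by simp
qed

lemma two_le_card_colours_cube:
  assumes "d \<ge> 1" and "proper_coloring (cube_vertices d) cube_adj c"
  shows "2 \<le> card (c ` cube_vertices d)"
proof -
  define v where "v = replicate d False"
  have vertices: "v \<in> cube_vertices d" "flip 0 v \<in> cube_vertices d"
    by (simp_all add: v_def cube_vertices_def)
  have "cube_adj v (flip 0 v)"
    using assms(1) by (auto simp: v_def cube_adj_iff_flip intro!: exI[of _ 0])
  then have "c v \<noteq> c (flip 0 v)"
    using assms(2) vertices by (simp add: proper_coloring_def)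
  then have "2 = card {c v, c (flip 0 v)}"
    by simp
  also have "\<dots> \<le> card (c ` cube_vertices d)"
    by (rule card_mono) (use vertices finite_cube_vertices in auto)
  finally show ?thesis .
qed

lemma even_sum_colour_counts_flip:
  assumes "even (length v)"
  shows "even (\<Sum>i<length v. card {j \<in> {..<length v}. c (flip j (flip i v)) = b})"
proof -
  define n where "n = length v"
  define g :: "nat \<Rightarrow> nat \<Rightarrow> nat" where "g i j = of_bool (c (flip j (flip i v)) = b)" for i j
  have "(\<Sum>i<n. card {j \<in> {..<n}. c (flip j (flip i v)) = b}) = (\<Sum>i<n. \<Sum>j<n. g i j)"
    by (simp add: g_def of_bool_def sum.inter_filter[symmetric])
  also have "\<dots> = (\<Sum>i<n. g i i) + 2 * (\<Sum>i<n. \<Sum>j<i. g i j)"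
    by (rule sum_square_symmetric) (simp add: g_def flip_commute)
  also have "(\<Sum>i<n. g i i) = n * of_bool (c v = b)"
    by (simp add: g_def)
  finally show ?thesis
    using assms by (simp add: n_def)
qed

lemma odd_colour_count_iff_3_colours:
  assumes "even d" and "d \<ge> 1" and so: "strong_odd_coloring (cube_vertices d) cube_adj c"
    and three: "card (c ` cube_vertices d) \<le> 3"
    and w: "length w = d" and b: "b \<in> c ` cube_vertices d"
  shows "odd (card {i \<in> {..<d}. c (flip i w) = b}) \<longleftrightarrow> c w \<noteq> b"
proof -
  define C where "C = c ` cube_vertices d - {c w}"
  define f where "f i = c (flip i w)" for i
  have proper: "\<And>i. i < d \<Longrightarrow> f i \<noteq> c w"
    and odd_fibres: "\<And>i. i < d \<Longrightarrow> odd (card {j \<in> {..<d}. f j = f i})"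
    using so w unfolding strong_odd_coloring_cube_iff f_def by auto
  have sub: "f ` {..<d} \<subseteq> C"
    using proper w by (auto simp: C_def f_def cube_vertices_def)
  have fin: "finite C"
    by (simp add: C_def finite_cube_vertices)
  have "card (f ` {..<d}) \<le> card C" and "card C \<le> 2"
    using card_mono[OF fin sub] three w by (simp_all add: C_def cube_vertices_def)
  moreover have "even (card (f ` {..<d}))"
    using even_card_image_iff_odd_fibres[of "{..<d}" f] odd_fibres \<open>even d\<close> by simp
  moreover have "0 < card (f ` {..<d})"
    using \<open>d \<ge> 1\<close> by (simp add: card_gt_0_iff lessThan_empty_iff)
  ultimately have "card (f ` {..<d}) = card C"
    by (elim evenE) presburger
  then have "f ` {..<d} = C"
    by (rule card_subset_eq[OF fin sub])
  show ?thesis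
  proof (cases "c w = b")
    case True
    have "\<forall>i<d. c (flip i w) \<noteq> b"
      using proper True by (simp add: f_def)
    then have "{i \<in> {..<d}. c (flip i w) = b} = {}"
      by auto
    then have "even (card {i \<in> {..<d}. c (flip i w) = b})"
      by (metis card.empty even_zero)
    with True show ?thesis
      by blast
  next
    case False
    with b have "b \<in> f ` {..<d}"
      unfolding \<open>f ` {..<d} = C\<close> C_def by blast
    then obtain i where "i < d" and "f i = b"
      by blast
    with False show ?thesis
      using odd_fibres by (auto simp: f_def)
  qed
qed

lemma four_le_card_colours_even_cube:
  assumes "even d" and "d \<ge> 1" and so: "strong_odd_coloring (cube_vertices d) cube_adj c"
  shows "4 \<le> card (c ` cube_vertices d)"
proof (rule ccontr)
  assume "\<not> 4 \<le> card (c ` cube_vertices d)"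
  then have three: "card (c ` cube_vertices d) \<le> 3"
    by simp
  define v where "v = replicate d False"
  have len: "length v = d"
    by (simp add: v_def)
  define b where "b = c (flip 0 v)"
  have "\<forall>i<d. c (flip i v) \<noteq> c v"
    using so len unfolding strong_odd_coloring_cube_iff by blast
  then have "c (flip 0 v) \<noteq> c v"
    using \<open>d \<ge> 1\<close> by simp
  then have b: "b \<in> c ` cube_vertices d" "b \<noteq> c v"
    using len by (auto simp: b_def cube_vertices_def)
  note count_iff = odd_colour_count_iff_3_colours[OF assms three _ b(1)]
  have "even (\<Sum>i<d. card {j \<in> {..<d}. c (flip j (flip i v)) = b})"
    using even_sum_colour_counts_flip[of v c b] len \<open>even d\<close> by simp
  then have "even (card {i \<in> {..<d}. odd (card {j \<in> {..<d}. c (flip j (flip i v)) = b})})"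
    by (simp add: even_sum_iff)
  also have "{i \<in> {..<d}. odd (card {j \<in> {..<d}. c (flip j (flip i v)) = b})}
      = {i \<in> {..<d}. c (flip i v) \<noteq> b}"
    using count_iff[of "flip _ v"] len by simp
  finally have "even (card {i \<in> {..<d}. c (flip i v) \<noteq> b})" .
  moreover have "d = card {i \<in> {..<d}. c (flip i v) \<noteq> b} + card {i \<in> {..<d}. c (flip i v) = b}"
  proof -
    have "{..<d} = {i \<in> {..<d}. c (flip i v) \<noteq> b} \<union> {i \<in> {..<d}. c (flip i v) = b}"
      by auto
    then have "d = card ({i \<in> {..<d}. c (flip i v) \<noteq> b} \<union> {i \<in> {..<d}. c (flip i v) = b})"
      by (metis card_lessThan)
    also have "\<dots> = card {i \<in> {..<d}. c (flip i v) \<noteq> b} + card {i \<in> {..<d}. c (flip i v) = b}"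
      by (rule card_Un_disjoint) auto
    finally show ?thesis .
  qed
  moreover have "odd (card {i \<in> {..<d}. c (flip i v) = b})"
    using count_iff[OF len] b(2) by simp
  ultimately show False
    using \<open>even d\<close> by presburger
qed

theorem proposition13:
  fixes d :: nat
  assumes "d \<ge> 1"
  shows "chi_so (cube_vertices d) cube_adj = (if odd d then 2 else 4)"
proof (cases "odd d")
  case True
  have "chi_so (cube_vertices d) cube_adj = 2"
  proof (rule chi_so_eqI)
    show "parity ` cube_vertices d \<subseteq> {..<2}"
      using parity_less_2 by blast
    show "strong_odd_coloring (cube_vertices d) cube_adj parity"
      using True by (rule strong_odd_coloring_parity)
  qed (auto simp: strong_odd_coloring_def intro: two_le_card_colours_cube[OF assms])
  with True show ?thesis
    by simp
next
  case False
  have "chi_so (cube_vertices d) cube_adj = 4"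
  proof (rule chi_so_eqI)
    show "parity_first_bit ` cube_vertices d \<subseteq> {..<4}"
      using parity_first_bit_less_4 by blast
    show "strong_odd_coloring (cube_vertices d) cube_adj parity_first_bit"
      using False by (simp add: strong_odd_coloring_parity_first_bit)
  qed (use four_le_card_colours_even_cube[OF _ assms] False in simp)
  with False show ?thesis
    by simp
qed

end
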